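(* Let $f=\prod_{i=1}^n(y-a_i)\in\overline K[y]$ be reduced ($a_i$ pairwise distinct, $n\ge 2$) with $\nu(a_i)>0$ for all $i$. (i) For every $w=\sum_iw_i\varepsilon_i\in\overline{\mathcal E}$, the solution $(u,v)\in\overline{\mathcal F}\times\overline{\mathcal F}$ of $uf'_x+vf'_y=w$ is $$u=(\mathcal A_{|\overline{\mathcal F}})^{-1}\mathcal Bw,\qquad v=\sum_{i=1}^n\Bigl(u_ia'_i+\frac{w_i}{\varepsilon_i(a_i)}\Bigr)\varepsilon_i,$$ where $u=\sum_iu_i\varepsilon_i$. In particular, for every $r\in\mathbf Q$, $\overline{\mathcal E}_r\subset\overline{\mathcal F}_{r-\theta}f'_x+\overline{\mathcal F}_{r-\tau}f'_y$. (ii) If $w=uf'_x+vf'_y\in\overline{\mathcal E}_r$ with $u\in\overline{\mathcal F}_{r-\theta}$ and $v\in\overline{\mathcal F}_{r-\tau}$, then $u'_x+v'_y\in\overline{\mathcal F}_{r-\pi}$.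
   Context: $\overline K=\bigcup_{d\ge1}\mathbf C[[x^{1/d}]][1/x]$ with valuation $\nu$; $'$, $\partial_x$ denote $d/dx$. $\overline{\mathcal E}$: polynomials in $y$ over $\overline K$ of degree $<n$, with basis $\varepsilon_i=\prod_{j\ne i}(y-a_j)$; $\varepsilon_i(a_i)=\prod_{j\ne i}(a_i-a_j)$; $\overline{\mathcal F}=\{\sum u_i\varepsilon_i:\sum u_i=0\}$ (degree $<n-1$). $\mathrm{val}(\sum w_i\varepsilon_i)=\inf\nu(w_i)$; $\overline{\mathcal E}_r$ = elements with $\mathrm{val}\ge r$, $\overline{\mathcal F}_r=\overline{\mathcal E}_r\cap\overline{\mathcal F}$. $m_{i,j}=\nu(a_i-a_j)$, $m_i=\sum_{j\ne i}m_{i,j}$, $\pi=\sup\{m_i+m_{i,j}:i\ne j\}$, $\delta=\inf_i\nu(a_i)$, $\theta=\pi-1$, $\tau=\pi-\delta$. $\mathcal A$ is the symmetric matrix with off-diagonal entries $-(a'_i-a'_j)/(a_i-a_j)$ and diagonal entries $\sum_{j\ne i}(a'_i-a'_j)/(a_i-a_j)$; it restricts to an automorphism $\mathcal A_{|\overline{\mathcal F}}$ of $\overline{\mathcal F}$. $\mathcal B$ is the symmetric matrix with off-diagonal entries $\beta_{i,j}=-(\varepsilon_i(a_i)-\varepsilon_j(a_j))/((a_i-a_j)\varepsilon_i(a_i)\varepsilon_j(a_j))$ and diagonal entries $\beta_{i,i}=-\sum_{j\ne i}\beta_{i,j}$ (row and column sums zero). Matrices act on $\overline{\mathcal E}$ through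 coordinates in the basis $(\varepsilon_i)$. *)

theory Defs
  imports "HOL-Computational_Algebra.Computational_Algebra"
begin

text \<open>
  An element of the Puiseux field lying in
  C((x^(1/d))) is represented by a formal Laurent series p in t = x^(1/d),
  i.e. by a value of type complex fls, for a fixed integer d >= 1.
  Every finite family of Puiseux series lies in such a subfield, and the
  subfields are compatible (as differential valued fields), so a statement
  universally quantified over d >= 1 is the statement over the whole
  Puiseux field.
\<close>

type_synonym puis = "complex fls"

text \<open>The valuation nu (in powers of x) of a nonzero element: subdegree in t divided by d.\<close>
definition pnu :: "nat \<Rightarrow> puis \<Rightarrow> rat" where
  "pnu d p = of_int (fls_subdegree p) / of_nat d"

definition pnu_ge :: "nat \<Rightarrow> puis \<Rightarrow> rat \<Rightarrow> bool" where
  "pnu_ge d p r \<longleftrightarrow> p = 0 \<or> r \<le> pnu d p"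

text \<open>The derivation d/dx: with t = x^(1/d), d/dx (t^m) = (m/d) t^(m-d).\<close>
definition pder :: "nat \<Rightarrow> puis \<Rightarrow> puis" where
  "pder d p = fls_const (1 / of_nat d) * fls_shift (int d - 1) (fls_deriv p)"

definition fpol :: "(nat \<Rightarrow> puis) \<Rightarrow> nat \<Rightarrow> puis poly" where
  "fpol a n = (\<Prod>i<n. [:- a i, 1:])"

definition pdx :: "nat \<Rightarrow> puis poly \<Rightarrow> puis poly" where
  "pdx d p = map_poly (pder d) p"

definition eps :: "(nat \<Rightarrow> puis) \<Rightarrow> nat \<Rightarrow> nat \<Rightarrow> puis poly" where
  "eps a n i = (\<Prod>j\<in>{..<n} - {i}. [:- a j, 1:])"

definition epsv :: "(nat \<Rightarrow> puis) \<Rightarrow> nat \<Rightarrow> nat \<Rightarrow> puis" where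
  "epsv a n i = (\<Prod>j\<in>{..<n} - {i}. a i - a j)"

definition elem :: "(nat \<Rightarrow> puis) \<Rightarrow> nat \<Rightarrow> (nat \<Rightarrow> puis) \<Rightarrow> puis poly" where
  "elem a n w = (\<Sum>i<n. smult (w i) (eps a n i))"

definition coord :: "(nat \<Rightarrow> puis) \<Rightarrow> nat \<Rightarrow> puis poly \<Rightarrow> nat \<Rightarrow> puis" where
  "coord a n p i = poly p (a i) / epsv a n i"

definition inE :: "nat \<Rightarrow> puis poly \<Rightarrow> bool" where
  "inE n p \<longleftrightarrow> degree p < n"

definition inF :: "(nat \<Rightarrow> puis) \<Rightarrow> nat \<Rightarrow> puis poly \<Rightarrow> bool" where
  "inF a n p \<longleftrightarrow> inE n p \<and> (\<Sum>i<n. coord a n p i) = 0"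

definition val_ge :: "nat \<Rightarrow> (nat \<Rightarrow> puis) \<Rightarrow> nat \<Rightarrow> puis poly \<Rightarrow> rat \<Rightarrow> bool" where
  "val_ge d a n p r \<longleftrightarrow> (\<forall>i<n. pnu_ge d (coord a n p i) r)"

definition mij :: "nat \<Rightarrow> (nat \<Rightarrow> puis) \<Rightarrow> nat \<Rightarrow> nat \<Rightarrow> rat" where
  "mij d a i j = pnu d (a i - a j)"

definition mi :: "nat \<Rightarrow> (nat \<Rightarrow> puis) \<Rightarrow> nat \<Rightarrow> nat \<Rightarrow> rat" where
  "mi d a n i = (\<Sum>j\<in>{..<n} - {i}. mij d a i j)"

definition piinv :: "nat \<Rightarrow> (nat \<Rightarrow> puis) \<Rightarrow> nat \<Rightarrow> rat" where
  "piinv d a n = Max {mi d a n i + mij d a i j | i j. i < n \<and> j < n \<and> i \<noteq> j}"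

text \<open>delta = inf_i nu(a_i); a zero a_i has valuation +infinity and does not
  contribute (at most one a_i is zero since they are distinct and n >= 2).\<close>
definition deltainv :: "nat \<Rightarrow> (nat \<Rightarrow> puis) \<Rightarrow> nat \<Rightarrow> rat" where
  "deltainv d a n = Min {pnu d (a i) | i. i < n \<and> a i \<noteq> 0}"

definition thetainv :: "nat \<Rightarrow> (nat \<Rightarrow> puis) \<Rightarrow> nat \<Rightarrow> rat" where
  "thetainv d a n = piinv d a n - 1"

definition tauinv :: "nat \<Rightarrow> (nat \<Rightarrow> puis) \<Rightarrow> nat \<Rightarrow> rat" where
  "tauinv d a n = piinv d a n - deltainv d a n"

definition Amat :: "nat \<Rightarrow> (nat \<Rightarrow> puis) \<Rightarrow> nat \<Rightarrow> nat \<Rightarrow> nat \<Rightarrow> puis" where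
  "Amat d a n i j = (if i = j
     then (\<Sum>k\<in>{..<n} - {i}. (pder d (a i) - pder d (a k)) / (a i - a k))
     else - (pder d (a i) - pder d (a j)) / (a i - a j))"

definition beta :: "(nat \<Rightarrow> puis) \<Rightarrow> nat \<Rightarrow> nat \<Rightarrow> nat \<Rightarrow> puis" where
  "beta a n i j = - (epsv a n i - epsv a n j) / ((a i - a j) * epsv a n i * epsv a n j)"

definition Bmat :: "(nat \<Rightarrow> puis) \<Rightarrow> nat \<Rightarrow> nat \<Rightarrow> nat \<Rightarrow> puis" where
  "Bmat a n i j = (if i = j then - (\<Sum>k\<in>{..<n} - {i}. beta a n i k) else beta a n i j)"

definition matvec :: "nat \<Rightarrow> (nat \<Rightarrow> nat \<Rightarrow> puis) \<Rightarrow> (nat \<Rightarrow> puis) \<Rightarrow> nat \<Rightarrow> puis" where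
  "matvec n M x i = (\<Sum>j<n. M i j * x j)"

end

theory Submission
  imports Defs "Jordan_Normal_Form.Determinant"
begin

text \<open>
  Write u, v, w in the Lagrange basis \<open>\<epsilon>\<^sub>i\<close>. The residual \<open>u f'\<^sub>x + v f'\<^sub>y - w\<close> has degree
  at most \<open>2n - 2\<close>, so it vanishes iff it has a double root at every \<open>a\<^sub>i\<close>. Since
  \<open>f'\<^sub>y(a\<^sub>i) = \<epsilon>\<^sub>i(a\<^sub>i)\<close> and \<open>f'\<^sub>x(a\<^sub>i) = -a'\<^sub>i \<epsilon>\<^sub>i(a\<^sub>i)\<close>, vanishing at \<open>a\<^sub>i\<close> determines \<open>v\<^sub>i\<close>, and
  then vanishing of the \<open>y\<close>-derivative at all nodes is the system \<open>\<A> u = \<B> w\<close>.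

  The matrix \<open>\<A>\<close> is a weighted graph Laplacian. Its weights
  \<open>(a'\<^sub>i - a'\<^sub>j)/(a\<^sub>i - a\<^sub>j)\<close> have the form \<open>m\<^sub>i\<^sub>,\<^sub>j x\<^sup>-\<^sup>1 + \<dots>\<close> with \<open>m\<^sub>i\<^sub>,\<^sub>j > 0\<close>, so on the
  lowest-order coefficients of a zero-sum vector \<open>\<A>\<close> acts as a Laplacian with positive
  real weights, which is injective on zero-sum vectors by the maximum principle. Hence
  \<open>\<A>\<close> is invertible on \<open>\<F>\<close> and raises valuations by one: \<open>\<nu>(u) \<ge> \<nu>(\<A> u) + 1\<close>.
  All valuation bounds then follow from termwise estimates of the explicit formulas.
\<close>

hide_const (open) Module.module.smult Congruence.elem

section \<open>Polynomials with many double roots\<close>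

lemma prod_linear_power_dvd:
  fixes a :: "nat \<Rightarrow> 'a::idom"
  assumes inj: "\<And>i j. i < n \<Longrightarrow> j < n \<Longrightarrow> i \<noteq> j \<Longrightarrow> a i \<noteq> a j" and p: "p \<noteq> 0"
    and dvd: "\<And>i. i < n \<Longrightarrow> [:- a i, 1:] ^ k dvd p"
  shows "(\<Prod>i<n. [:- a i, 1:] ^ k) dvd p"
  using inj dvd
proof (induction n)
  case 0
  then show ?case by simp
next
  case (Suc n)
  have "(\<Prod>i<n. [:- a i, 1:] ^ k) dvd p" using Suc by auto
  then obtain q where q: "p = (\<Prod>i<n. [:- a i, 1:] ^ k) * q" by (elim dvdE)
  have "poly (\<Prod>i<n. [:- a i, 1:] ^ k) (a n) \<noteq> 0"
    using Suc.prems(1) by (auto simp: poly_prod)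
  then have order0: "order (a n) (\<Prod>i<n. [:- a i, 1:] ^ k) = 0" by (simp add: order_root)
  have "k \<le> order (a n) p" using Suc.prems(2)[of n] p by (simp add: order_divides)
  also have "order (a n) p = order (a n) (\<Prod>i<n. [:- a i, 1:] ^ k) + order (a n) q"
    using p q by (simp add: order_mult)
  finally have "[:- a n, 1:] ^ k dvd q" using order0 by (simp add: order_divides)
  then have "(\<Prod>i<n. [:- a i, 1:] ^ k) * [:- a n, 1:] ^ k dvd (\<Prod>i<n. [:- a i, 1:] ^ k) * q"
    by (rule mult_dvd_mono[OF dvd_refl])
  then show ?case using q by simp
qed

lemma eq_0_if_linear_powers_dvd:
  fixes a :: "nat \<Rightarrow> 'a::idom"
  assumes inj: "\<And>i j. i < n \<Longrightarrow> j < n \<Longrightarrow> i \<noteq> j \<Longrightarrow> a i \<noteq> a j"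
    and dvd: "\<And>i. i < n \<Longrightarrow> [:- a i, 1:] ^ k dvd p" and deg: "degree p < k * n"
  shows "p = 0"
proof (rule ccontr)
  assume p: "p \<noteq> 0"
  have "degree (\<Prod>i<n. [:- a i, 1:] ^ k) \<le> degree p"
    by (rule dvd_imp_degree_le[OF prod_linear_power_dvd[OF inj p dvd] p])
  moreover have "degree (\<Prod>i<n. [:- a i, 1:] ^ k) = k * n"
    by (simp add: degree_prod_sum_eq degree_linear_power)
  ultimately show False using deg by simp
qed

lemma linear_square_dvd_if_double_root:
  fixes p :: "'a::{idom,semiring_char_0} poly"
  assumes "poly p x = 0" "poly (pderiv p) x = 0"
  shows "[:- x, 1:] ^ 2 dvd p"
proof (cases "p = 0")
  case False
  have "pderiv p \<noteq> 0"
  proof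
    assume "pderiv p = 0"
    then obtain c where "p = [:c:]" by (metis degree_eq_zeroE pderiv_eq_0_iff)
    then show False using assms(1) False by simp
  qed
  then have "order x (pderiv p) \<noteq> 0" using assms(2) by (simp add: order_root)
  then have "2 \<le> order x p" using order_pderiv[OF False assms(1)] by simp
  then show ?thesis by (simp add: order_divides)
qed simp

lemma coeff_mult_at_degree_bounds:
  fixes p q :: "'a::comm_semiring_0 poly"
  assumes "degree p \<le> i" "degree q \<le> j"
  shows "coeff (p * q) (i + j) = coeff p i * coeff q j"
proof -
  have "coeff (p * q) (i + j) = (\<Sum>k\<le>i + j. coeff p k * coeff q (i + j - k))"
    by (rule coeff_mult)
  also have "\<dots> = (\<Sum>k\<le>i + j. if k = i then coeff p i * coeff q j else 0)"
  proof (rule sum.cong[OF refl])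
    fix k
    show "coeff p k * coeff q (i + j - k) = (if k = i then coeff p i * coeff q j else 0)"
    proof (cases k i rule: linorder_cases)
      case less
      then have "degree q < i + j - k" using assms by linarith
      then show ?thesis using less by (simp add: coeff_eq_0)
    next
      case greater
      then have "degree p < k" using assms by linarith
      then show ?thesis using greater by (simp add: coeff_eq_0)
    qed simp
  qed
  also have "\<dots> = coeff p i * coeff q j" by simp
  finally show ?thesis .
qed

section \<open>The Lagrange basis\<close>

definition node_sum :: "(nat \<Rightarrow> puis) \<Rightarrow> nat \<Rightarrow> nat \<Rightarrow> (nat \<Rightarrow> puis) \<Rightarrow> puis" where
  "node_sum a n i c = (\<Sum>j\<in>{..<n} - {i}. (c i + c j) / (a i - a j))"

locale distinct_nodes =
  fixes a :: "nat \<Rightarrow> puis" and n :: nat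
  assumes distinct: "\<And>i j. i < n \<Longrightarrow> j < n \<Longrightarrow> i \<noteq> j \<Longrightarrow> a i \<noteq> a j"
begin

lemma node_diff_nonzero: "i < n \<Longrightarrow> j < n \<Longrightarrow> i \<noteq> j \<Longrightarrow> a i - a j \<noteq> 0"
  using distinct by simp

lemma poly_eps_node:
  assumes "i < n" "j < n"
  shows "poly (eps a n j) (a i) = (if i = j then epsv a n i else 0)"
proof (cases "i = j")
  case False
  then have "(\<Prod>k\<in>{..<n} - {j}. a i - a k) = 0"
    using assms by (intro prod_zero) auto
  then show ?thesis using False by (simp add: eps_def poly_prod)
qed (simp add: eps_def epsv_def poly_prod)

lemma epsv_nonzero: "i < n \<Longrightarrow> epsv a n i \<noteq> 0"
  using distinct by (force simp: epsv_def)

lemma degree_eps: "j < n \<Longrightarrow> degree (eps a n j) = n - 1"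
  by (simp add: eps_def degree_prod_sum_eq)

lemma coeff_eps_top: "j < n \<Longrightarrow> coeff (eps a n j) (n - 1) = 1"
proof -
  assume "j < n"
  have "lead_coeff (eps a n j) = 1" by (simp add: eps_def lead_coeff_prod)
  then show ?thesis using degree_eps[OF \<open>j < n\<close>] by simp
qed

lemma degree_elem_le: "degree (elem a n c) \<le> n - 1"
  unfolding Defs.elem_def
  by (rule degree_sum_le) (auto intro: order.trans[OF degree_smult_le] simp: degree_eps)

lemma poly_elem_node:
  assumes i: "i < n"
  shows "poly (elem a n c) (a i) = c i * epsv a n i"
proof -
  have "poly (elem a n c) (a i) = (\<Sum>j<n. if j = i then c i * epsv a n i else 0)"
    unfolding Defs.elem_def poly_sum poly_smult by (rule sum.cong) (auto simp: poly_eps_node[OF i])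
  then show ?thesis using i by simp
qed

lemma coord_elem: "i < n \<Longrightarrow> coord a n (elem a n c) i = c i"
  using epsv_nonzero by (simp add: coord_def poly_elem_node)

lemma elem_cong: "(\<And>i. i < n \<Longrightarrow> c i = c' i) \<Longrightarrow> elem a n c = elem a n c'"
  by (simp add: Defs.elem_def)

lemma elem_coord:
  assumes deg: "degree p < n"
  shows "elem a n (coord a n p) = p"
proof -
  let ?D = "p - elem a n (coord a n p)"
  have "degree ?D < 1 * n"
    using degree_elem_le[of "coord a n p"] deg by (simp add: degree_diff_less)
  moreover have "[:- a i, 1:] ^ 1 dvd ?D" if i: "i < n" for i
  proof -
    have "poly ?D (a i) = 0"
      using epsv_nonzero[OF i] by (simp add: poly_elem_node[OF i] coord_def)
    then show ?thesis by (simp only: poly_eq_0_iff_dvd power_one_right)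
  qed
  ultimately have "?D = 0" by (intro eq_0_if_linear_powers_dvd[where k = 1, OF distinct]) auto
  then show ?thesis by simp
qed

lemma coeff_elem_top: "coeff (elem a n c) (n - 1) = (\<Sum>i<n. c i)"
  unfolding Defs.elem_def coeff_sum coeff_smult by (rule sum.cong) (auto simp: coeff_eps_top[simplified])

lemma sum_coord_eq_coeff_top: "degree p < n \<Longrightarrow> (\<Sum>i<n. coord a n p i) = coeff p (n - 1)"
  using coeff_elem_top[of "coord a n p"] elem_coord by simp

lemma inF_iff_coeff_top: "inF a n p \<longleftrightarrow> degree p < n \<and> coeff p (n - 1) = 0"
  using sum_coord_eq_coeff_top by (auto simp: inF_def inE_def)

lemma epsv_remove_factor:
  assumes "i < n" "j < n" "i \<noteq> j"
  shows "epsv a n i = (a i - a j) * (\<Prod>l\<in>{..<n} - {i} - {j}. a i - a l)"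
  unfolding epsv_def using assms by (subst prod.remove[of _ j]) auto

lemma poly_pderiv_eps_node:
  assumes i: "i < n" and j: "j < n"
  shows "poly (pderiv (eps a n j)) (a i) =
    (if j = i then epsv a n i * (\<Sum>k\<in>{..<n} - {i}. 1 / (a i - a k)) else epsv a n i / (a i - a j))"
proof -
  let ?S = "{..<n} - {j}"
  have "poly (pderiv (eps a n j)) (a i) = (\<Sum>k\<in>?S. \<Prod>l\<in>?S - {k}. a i - a l)"
    by (simp add: eps_def pderiv_prod pderiv_pCons poly_sum poly_prod)
  also have "\<dots> = (if j = i then epsv a n i * (\<Sum>k\<in>{..<n} - {i}. 1 / (a i - a k))
                   else epsv a n i / (a i - a j))"
  proof (cases "j = i")
    case True
    have "(\<Prod>l\<in>?S - {k}. a i - a l) = epsv a n i * (1 / (a i - a k))" if k: "k \<in> ?S" for k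
      using epsv_remove_factor[of i k] node_diff_nonzero[of i k] k i True by auto
    then show ?thesis using True by (simp add: sum_distrib_left)
  next
    case False
    then have ij: "i \<noteq> j" by simp
    have others: "(\<Sum>k\<in>?S - {i}. \<Prod>l\<in>?S - {k}. a i - a l) = 0"
    proof (rule sum.neutral, rule ballI)
      fix k assume "k \<in> ?S - {i}"
      then have "i \<in> ?S - {k}" using i ij by auto
      then show "(\<Prod>l\<in>?S - {k}. a i - a l) = 0" by (subst prod_zero_iff) auto
    qed
    have "{..<n} - {i} - {j} = ?S - {i}" by auto
    then have "epsv a n i = (a i - a j) * (\<Prod>l\<in>?S - {i}. a i - a l)"
      using epsv_remove_factor[OF i j ij] by simp
    then have "epsv a n i / (a i - a j) = (\<Prod>l\<in>?S - {i}. a i - a l)"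
      using nonzero_mult_div_cancel_left[OF node_diff_nonzero[OF i j ij]] by (simp only:)
    moreover have "(\<Sum>k\<in>?S. \<Prod>l\<in>?S - {k}. a i - a l)
        = (\<Prod>l\<in>?S - {i}. a i - a l) + (\<Sum>k\<in>?S - {i}. \<Prod>l\<in>?S - {k}. a i - a l)"
      by (rule sum.remove) (use i ij in auto)
    ultimately show ?thesis using others False by simp
  qed
  finally show ?thesis .
qed

lemma poly_pderiv_elem_node:
  assumes i: "i < n"
  shows "poly (pderiv (elem a n c)) (a i) = epsv a n i * node_sum a n i c"
proof -
  let ?e = "epsv a n i" and ?S = "{..<n} - {i}"
  have "poly (pderiv (elem a n c)) (a i) = (\<Sum>j<n. c j * poly (pderiv (eps a n j)) (a i))"
    by (simp add: Defs.elem_def higher_pderiv_sum[of 1, simplified] pderiv_smult poly_sum)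
  also have "\<dots> = c i * poly (pderiv (eps a n i)) (a i)
                  + (\<Sum>j\<in>?S. c j * poly (pderiv (eps a n j)) (a i))"
    using i by (simp add: sum.remove)
  also have "\<dots> = c i * (?e * (\<Sum>k\<in>?S. 1 / (a i - a k))) + (\<Sum>j\<in>?S. c j * (?e / (a i - a j)))"
    using i by (simp add: poly_pderiv_eps_node)
  also have "\<dots> = ?e * node_sum a n i c"
    unfolding node_sum_def add_divide_distrib sum.distrib
    by (simp add: sum_distrib_left algebra_simps)
  finally show ?thesis .
qed

lemma node_sum_inverse_epsv: "i < n \<Longrightarrow> node_sum a n i (\<lambda>k. 1 / epsv a n k) = 0"
proof -
  assume i: "i < n"
  have "elem a n (\<lambda>k. 1 / epsv a n k) = elem a n (coord a n 1)"
    by (rule elem_cong) (simp add: coord_def)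
  also have "\<dots> = 1" using i by (intro elem_coord) simp
  finally have "0 = poly (pderiv (elem a n (\<lambda>k. 1 / epsv a n k))) (a i)" by simp
  then show ?thesis using epsv_nonzero[OF i] by (simp add: poly_pderiv_elem_node[OF i])
qed

lemma pderiv_fpol: "pderiv (fpol a n) = elem a n (\<lambda>_. 1)"
  by (simp add: fpol_def Defs.elem_def eps_def pderiv_prod pderiv_pCons)

lemma poly_fpol_node: "i < n \<Longrightarrow> poly (fpol a n) (a i) = 0"
  by (simp add: fpol_def poly_prod) (metis lessThan_iff)

lemma degree_fpol: "degree (fpol a n) = n"
  by (simp add: fpol_def degree_prod_sum_eq)

lemma coeff_fpol_top: "coeff (fpol a n) n = 1"
proof -
  have "lead_coeff (fpol a n) = 1" by (simp add: fpol_def lead_coeff_prod)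
  then show ?thesis using degree_fpol by simp
qed

end

section \<open>The derivation \<open>d/dx\<close>\<close>

lemma fls_nth_pder: "fls_nth (pder d p) k = of_int (k + int d) / of_nat d * fls_nth p (k + int d)"
  by (cases "d = 0") (simp_all add: pder_def field_simps)

lemma pder_add: "pder d (p + q) = pder d p + pder d q"
  by (simp add: pder_def distrib_left)

lemma pder_diff: "pder d (p - q) = pder d p - pder d q"
  by (simp add: pder_def right_diff_distrib)

lemma pder_mult: "pder d (p * q) = pder d p * q + p * pder d q"
  by (simp add: pder_def fls_shifted_times_simps algebra_simps)

lemma pder_zero [simp]: "pder d 0 = 0"
  by (simp add: pder_def)

lemma pder_of_nat [simp]: "pder d (of_nat k) = 0"
  by (simp add: pder_def)

lemma pder_one [simp]: "pder d 1 = 0"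
  by (simp add: pder_def)

lemma coeff_pdx: "coeff (pdx d p) k = pder d (coeff p k)"
  by (simp add: pdx_def coeff_map_poly)

lemma pdx_pCons: "pdx d (pCons c p) = pCons (pder d c) (pdx d p)"
  by (simp add: pdx_def map_poly_pCons)

lemma pdx_pderiv: "pdx d (pderiv p) = pderiv (pdx d p)"
  by (rule poly_eqI) (simp add: coeff_pdx coeff_pderiv pder_mult del: of_nat_Suc)

lemma degree_pdx_le: "degree (pdx d p) \<le> degree p"
  by (simp add: pdx_def map_poly_degree_leq)

lemma poly_pdx: "poly (pdx d p) z = pder d (poly p z) - poly (pderiv p) z * pder d z"
proof (induction p rule: pCons_induct)
  case (pCons c p)
  show ?case by (simp add: pdx_pCons pderiv_pCons pCons.IH pder_add pder_mult algebra_simps)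
qed (simp add: pdx_def)

section \<open>Valuations\<close>

lemma pnu_ge_iff:
  assumes d: "d \<ge> 1"
  shows "pnu_ge d p r \<longleftrightarrow> (\<forall>k. of_int k < r * of_nat d \<longrightarrow> fls_nth p k = 0)"
proof (cases "p = 0")
  case False
  have "pnu_ge d p r \<longleftrightarrow> r * of_nat d \<le> of_int (fls_subdegree p)"
    using False d by (simp add: pnu_ge_def pnu_def le_divide_eq)
  also have "\<dots> \<longleftrightarrow> (\<forall>k. of_int k < r * of_nat d \<longrightarrow> fls_nth p k = 0)"
  proof (intro iffI allI impI)
    fix k :: int
    assume "r * of_nat d \<le> of_int (fls_subdegree p)" "of_int k < r * of_nat d"
    then have "k < fls_subdegree p" by linarith
    then show "fls_nth p k = 0" by simp
  next
    assume "\<forall>k. of_int k < r * of_nat d \<longrightarrow> fls_nth p k = 0"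
    moreover have "fls_nth p (fls_subdegree p) \<noteq> 0" using False by simp
    ultimately show "r * of_nat d \<le> of_int (fls_subdegree p)" by (meson not_le)
  qed
  finally show ?thesis .
qed (simp add: pnu_ge_def)

lemma pnu_ge_zero [simp]: "pnu_ge d 0 r"
  by (simp add: pnu_ge_def)

lemma pnu_ge_self: "pnu_ge d p (pnu d p)"
  by (simp add: pnu_ge_def)

lemma pnu_ge_add: "d \<ge> 1 \<Longrightarrow> pnu_ge d p r \<Longrightarrow> pnu_ge d q r \<Longrightarrow> pnu_ge d (p + q) r"
  by (simp add: pnu_ge_iff)

lemma pnu_ge_uminus: "d \<ge> 1 \<Longrightarrow> pnu_ge d p r \<Longrightarrow> pnu_ge d (- p) r"
  by (simp add: pnu_ge_iff)

lemma pnu_ge_diff: "d \<ge> 1 \<Longrightarrow> pnu_ge d p r \<Longrightarrow> pnu_ge d q r \<Longrightarrow> pnu_ge d (p - q) r"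
  by (simp add: pnu_ge_iff)

lemma pnu_ge_sum: "d \<ge> 1 \<Longrightarrow> (\<And>x. x \<in> S \<Longrightarrow> pnu_ge d (f x) r) \<Longrightarrow> pnu_ge d (sum f S) r"
  by (simp add: pnu_ge_iff fls_nth_sum)

lemma pnu_ge_mono: "pnu_ge d p r \<Longrightarrow> s \<le> r \<Longrightarrow> pnu_ge d p s"
  by (auto simp: pnu_ge_def)

lemma pnu_mult: "p \<noteq> 0 \<Longrightarrow> q \<noteq> 0 \<Longrightarrow> pnu d (p * q) = pnu d p + pnu d q"
  by (simp add: pnu_def add_divide_distrib)

lemma pnu_uminus [simp]: "pnu d (- p) = pnu d p"
  by (simp add: pnu_def)

lemma pnu_diff_commute: "pnu d (p - q) = pnu d (q - p)"
  by (metis minus_diff_eq pnu_uminus)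

lemma pnu_prod: "(\<And>x. x \<in> S \<Longrightarrow> f x \<noteq> 0) \<Longrightarrow> pnu d (prod f S) = (\<Sum>x\<in>S. pnu d (f x))"
  by (simp add: pnu_def fls_subdegree_prod sum_divide_distrib)

lemma pnu_ge_mult:
  assumes "pnu_ge d p r" "pnu_ge d q s"
  shows "pnu_ge d (p * q) (r + s)"
  using assms by (cases "p = 0 \<or> q = 0") (auto simp: pnu_ge_def pnu_mult)

lemma pnu_ge_divide:
  assumes "pnu_ge d p r" "q \<noteq> 0"
  shows "pnu_ge d (p / q) (r - pnu d q)"
proof -
  have "pnu_ge d (inverse q) (- pnu d q)"
    using pnu_ge_self[of d "inverse q"] by (simp add: pnu_def)
  from pnu_ge_mult[OF assms(1) this] show ?thesis by (simp add: divide_inverse)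
qed

lemma pnu_ge_pder:
  assumes d: "d \<ge> 1" and p: "pnu_ge d p r"
  shows "pnu_ge d (pder d p) (r - 1)"
  unfolding pnu_ge_iff[OF d]
proof (intro allI impI)
  fix k :: int
  assume "of_int k < (r - 1) * of_nat d"
  then have "of_int (k + int d) < r * of_nat d" by (simp add: algebra_simps)
  then have "fls_nth p (k + int d) = 0" using p by (simp add: pnu_ge_iff[OF d])
  then show "fls_nth (pder d p) k = 0" by (simp add: fls_nth_pder)
qed

section \<open>The matrices \<open>\<A>\<close> and \<open>\<B>\<close>\<close>

lemma matvec_Amat:
  assumes i: "i < n"
  shows "matvec n (Amat d a n) x i =
    (\<Sum>j\<in>{..<n} - {i}. (pder d (a i) - pder d (a j)) / (a i - a j) * (x i - x j))"
proof -
  define c where "c j = (pder d (a i) - pder d (a j)) / (a i - a j)" for j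
  have "matvec n (Amat d a n) x i
      = Amat d a n i i * x i + (\<Sum>j\<in>{..<n} - {i}. Amat d a n i j * x j)"
    using i unfolding matvec_def by (simp add: sum.remove)
  also have "(\<Sum>j\<in>{..<n} - {i}. Amat d a n i j * x j) = (\<Sum>j\<in>{..<n} - {i}. - (c j * x j))"
  proof (rule sum.cong[OF refl])
    fix j assume "j \<in> {..<n} - {i}"
    then have "Amat d a n i j = - c j" unfolding Amat_def c_def by (simp add: minus_divide_left)
    then show "Amat d a n i j * x j = - (c j * x j)" by simp
  qed
  also have "Amat d a n i i * x i = (\<Sum>j\<in>{..<n} - {i}. c j * x i)"
    by (simp add: Amat_def c_def sum_distrib_right)
  also have "(\<Sum>j\<in>{..<n} - {i}. c j * x i) + (\<Sum>j\<in>{..<n} - {i}. - (c j * x j))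
      = (\<Sum>j\<in>{..<n} - {i}. c j * (x i - x j))"
    by (simp add: sum.distrib[symmetric] right_diff_distrib)
  finally show ?thesis unfolding c_def .
qed

lemma matvec_Bmat:
  assumes i: "i < n"
  shows "matvec n (Bmat a n) w i = (\<Sum>j\<in>{..<n} - {i}. beta a n i j * (w j - w i))"
proof -
  have "matvec n (Bmat a n) w i = Bmat a n i i * w i + (\<Sum>j\<in>{..<n} - {i}. Bmat a n i j * w j)"
    using i unfolding matvec_def by (simp add: sum.remove)
  also have "(\<Sum>j\<in>{..<n} - {i}. Bmat a n i j * w j) = (\<Sum>j\<in>{..<n} - {i}. beta a n i j * w j)"
    by (rule sum.cong[OF refl]) (simp add: Bmat_def)
  also have "Bmat a n i i * w i = (\<Sum>j\<in>{..<n} - {i}. - (beta a n i j * w i))"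
    by (simp add: Bmat_def sum_distrib_right sum_negf)
  also have "(\<Sum>j\<in>{..<n} - {i}. - (beta a n i j * w i)) + (\<Sum>j\<in>{..<n} - {i}. beta a n i j * w j)
      = (\<Sum>j\<in>{..<n} - {i}. beta a n i j * (w j - w i))"
    by (simp add: sum.distrib[symmetric] right_diff_distrib)
  finally show ?thesis .
qed

lemma sum_matvec_eq_0_if_column_sums_0:
  assumes "\<And>j. j < n \<Longrightarrow> (\<Sum>i<n. M i j) = 0"
  shows "(\<Sum>i<n. matvec n M x i) = 0"
proof -
  have "(\<Sum>i<n. matvec n M x i) = (\<Sum>j<n. x j * (\<Sum>i<n. M i j))"
    unfolding matvec_def by (subst sum.swap) (simp add: sum_distrib_left mult.commute)
  then show ?thesis using assms by simp
qed

lemma sum_matvec_Amat: "(\<Sum>i<n. matvec n (Amat d a n) x i) = 0"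
proof (rule sum_matvec_eq_0_if_column_sums_0)
  fix j assume j: "j < n"
  have "(\<Sum>i<n. Amat d a n i j) = Amat d a n j j + (\<Sum>i\<in>{..<n} - {j}. Amat d a n i j)"
    using j by (simp add: sum.remove)
  also have "(\<Sum>i\<in>{..<n} - {j}. Amat d a n i j)
      = (\<Sum>i\<in>{..<n} - {j}. - ((pder d (a j) - pder d (a i)) / (a j - a i)))"
  proof (rule sum.cong[OF refl])
    fix i assume "i \<in> {..<n} - {j}"
    then have "i \<noteq> j" by auto
    have swap: "a j - a i = - (a i - a j)" "pder d (a j) - pder d (a i) = - (pder d (a i) - pder d (a j))"
      by simp_all
    show "Amat d a n i j = - ((pder d (a j) - pder d (a i)) / (a j - a i))"
      unfolding Amat_def using \<open>i \<noteq> j\<close>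
      by (simp only: swap minus_divide_divide minus_divide_left if_False)
  qed
  also have "Amat d a n j j + \<dots> = 0" by (simp add: Amat_def sum_negf)
  finally show "(\<Sum>i<n. Amat d a n i j) = 0" .
qed

lemma beta_commute: "beta a n i j = beta a n j i"
proof -
  have "(a i - a j) * epsv a n i * epsv a n j = - ((a j - a i) * epsv a n j * epsv a n i)"
    by (simp add: algebra_simps)
  moreover have "epsv a n i - epsv a n j = - (epsv a n j - epsv a n i)" by simp
  ultimately show ?thesis unfolding beta_def by (metis minus_divide_divide)
qed

lemma sum_matvec_Bmat: "(\<Sum>i<n. matvec n (Bmat a n) x i) = 0"
proof (rule sum_matvec_eq_0_if_column_sums_0)
  fix j assume j: "j < n"
  have "(\<Sum>i<n. Bmat a n i j) = Bmat a n j j + (\<Sum>i\<in>{..<n} - {j}. Bmat a n i j)"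
    using j by (simp add: sum.remove)
  also have "(\<Sum>i\<in>{..<n} - {j}. Bmat a n i j) = (\<Sum>i\<in>{..<n} - {j}. beta a n j i)"
    by (rule sum.cong[OF refl]) (auto simp: Bmat_def beta_commute)
  also have "Bmat a n j j + \<dots> = 0" by (simp add: Bmat_def)
  finally show "(\<Sum>i<n. Bmat a n i j) = 0" .
qed

section \<open>Injectivity of \<open>\<A>\<close> and its gain of valuation\<close>

text \<open>Maximum principle: where \<open>Re z\<close> is maximal all terms of the equation are
  nonnegative, hence zero, so \<open>Re z\<close> is constant; the zero sum makes it zero.\<close>

lemma weighted_laplacian_Re_eq_0:
  fixes z :: "nat \<Rightarrow> complex" and \<mu> :: "nat \<Rightarrow> nat \<Rightarrow> real"
  assumes \<mu>: "\<And>i j. i < n \<Longrightarrow> j < n \<Longrightarrow> i \<noteq> j \<Longrightarrow> \<mu> i j > 0"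
    and eq: "\<And>i. i < n \<Longrightarrow> (\<Sum>j\<in>{..<n} - {i}. of_real (\<mu> i j) * (z i - z j)) = 0"
    and sum: "(\<Sum>i<n. z i) = 0"
  shows "\<forall>i<n. Re (z i) = 0"
proof (cases "n = 0")
  case False
  define M where "M = Max ((\<lambda>i. Re (z i)) ` {..<n})"
  have M_ge: "\<And>i. i < n \<Longrightarrow> Re (z i) \<le> M" unfolding M_def by simp
  have "M \<in> (\<lambda>i. Re (z i)) ` {..<n}" unfolding M_def using False by (intro Max_in) auto
  then obtain m where m: "m < n" "Re (z m) = M" by auto
  have "(\<Sum>j\<in>{..<n} - {m}. \<mu> m j * (Re (z m) - Re (z j))) = 0"
    using arg_cong[OF eq[OF m(1)], of Re] by (simp add: Re_sum)
  moreover have "0 \<le> \<mu> m j * (Re (z m) - Re (z j))" if "j \<in> {..<n} - {m}" for j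
    using \<mu>[of m j] M_ge[of j] m that by (auto intro: less_imp_le)
  ultimately have terms_0: "\<mu> m j * (Re (z m) - Re (z j)) = 0" if "j \<in> {..<n} - {m}" for j
    using that by (subst (asm) sum_nonneg_eq_0_iff) auto
  have all_M: "Re (z j) = M" if j: "j < n" for j
  proof (cases "j = m")
    case False
    have "\<mu> m j * (Re (z m) - Re (z j)) = 0" using terms_0[of j] False j by simp
    moreover have "\<mu> m j > 0" using \<mu>[of m j] m(1) j False by simp
    ultimately show ?thesis using m(2) by simp
  qed (use m in simp)
  have "of_nat n * M = Re (\<Sum>i<n. z i)" by (simp add: Re_sum all_M)
  then have "M = 0" using sum False by simp
  then show ?thesis using all_M by simp
qed simp

lemma weighted_laplacian_eq_0:
  fixes z :: "nat \<Rightarrow> complex" and \<mu> :: "nat \<Rightarrow> nat \<Rightarrow> real"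
  assumes \<mu>: "\<And>i j. i < n \<Longrightarrow> j < n \<Longrightarrow> i \<noteq> j \<Longrightarrow> \<mu> i j > 0"
    and eq: "\<And>i. i < n \<Longrightarrow> (\<Sum>j\<in>{..<n} - {i}. of_real (\<mu> i j) * (z i - z j)) = 0"
    and sum: "(\<Sum>i<n. z i) = 0"
  shows "\<forall>i<n. z i = 0"
proof -
  have eq': "(\<Sum>j\<in>{..<n} - {i}. of_real (\<mu> i j) * (- \<i> * z i - - \<i> * z j)) = 0" if "i < n" for i
  proof -
    have "(\<Sum>j\<in>{..<n} - {i}. of_real (\<mu> i j) * (- \<i> * z i - - \<i> * z j))
        = - \<i> * (\<Sum>j\<in>{..<n} - {i}. of_real (\<mu> i j) * (z i - z j))"
      by (simp add: sum_distrib_left algebra_simps)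
    then show ?thesis using eq[OF that] by simp
  qed
  have sum': "(\<Sum>i<n. - \<i> * z i) = 0"
    using sum by (simp add: sum_distrib_left[symmetric] sum_negf)
  have "\<forall>i<n. Re (z i) = 0" by (rule weighted_laplacian_Re_eq_0[OF \<mu> eq sum])
  moreover have "\<forall>i<n. Re (- \<i> * z i) = 0" by (rule weighted_laplacian_Re_eq_0[OF \<mu> eq' sum'])
  ultimately show ?thesis by (simp add: complex_eq_iff)
qed

text \<open>The variable \<open>x = t\<^sup>d\<close> of the Puiseux field.\<close>

definition xvar :: "nat \<Rightarrow> puis" where
  "xvar d = fls_shift (- int d) 1"

lemma fls_nth_xvar_mult: "fls_nth (xvar d * f) l = fls_nth f (l - int d)"
  by (simp add: xvar_def fls_shifted_times_simps)

lemma logderiv_lowest_term: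
  assumes d: "d \<ge> 1" and g: "g \<noteq> 0" and subdeg: "fls_subdegree g \<noteq> 0"
  shows "fls_subdegree (xvar d * pder d g / g) = 0 \<and>
         fls_nth (xvar d * pder d g / g) 0 = of_int (fls_subdegree g) / of_nat d"
proof -
  define h where "h = xvar d * pder d g"
  have h_nth: "fls_nth h l = of_int l / of_nat d * fls_nth g l" for l
    by (simp add: h_def fls_nth_xvar_mult fls_nth_pder)
  have h_lowest: "fls_nth h (fls_subdegree g) \<noteq> 0" using g subdeg d by (simp add: h_nth)
  then have "h \<noteq> 0" by auto
  have "fls_subdegree h = fls_subdegree g"
    using h_lowest by (intro fls_subdegree_eqI) (simp_all add: h_nth)
  then have subdeg0: "fls_subdegree (h / g) = 0"
    using \<open>h \<noteq> 0\<close> g by (simp add: divide_inverse)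
  have "h / g * g = h" using g by simp
  then have "fls_nth h (fls_subdegree (h / g) + fls_subdegree g) =
             fls_nth (h / g) (fls_subdegree (h / g)) * fls_nth g (fls_subdegree g)"
    by (metis fls_times_base)
  then have "fls_nth (h / g) 0 = fls_nth h (fls_subdegree g) / fls_nth g (fls_subdegree g)"
    using subdeg0 g by (simp add: field_simps)
  also have "\<dots> = of_int (fls_subdegree g) / of_nat d" using g by (simp add: h_nth)
  finally show ?thesis using subdeg0 by (simp add: h_def)
qed

lemma fls_nth_mult_subdegree_0:
  fixes q y :: "'a::comm_ring_1 fls"
  assumes q: "fls_subdegree q = 0" and low: "\<And>l. l < K \<Longrightarrow> fls_nth y l = 0"
  shows "fls_nth (q * y) K = fls_nth q 0 * fls_nth y K"
proof (cases "y = 0")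
  case False
  have ge: "K \<le> fls_subdegree y" by (rule fls_subdegree_geI[OF False low])
  show ?thesis
  proof (cases "fls_subdegree y = K")
    case False
    then have "K < fls_subdegree q + fls_subdegree y" and "fls_nth y K = 0"
      using ge q by simp_all
    then show ?thesis using fls_times_nth_eq0 by simp
  qed (use fls_times_base[of q y] q in simp)
qed simp

lemma fls_subdegree_ge_1:
  fixes g :: "'a::zero fls"
  assumes "g \<noteq> 0" "\<And>l. l \<le> 0 \<Longrightarrow> fls_nth g l = 0"
  shows "fls_subdegree g \<ge> 1"
  using fls_subdegree_geI[of g 1] assms by auto

lemma square_system_solvable_if_injective:
  fixes F :: "nat \<Rightarrow> nat \<Rightarrow> 'a::field"
  assumes inj: "\<And>y. (\<And>i. i < n \<Longrightarrow> (\<Sum>j<n. F i j * y j) = 0) \<Longrightarrow> (\<forall>j<n. y j = 0)"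
  shows "\<exists>y. \<forall>i<n. (\<Sum>j<n. F i j * y j) = b i"
proof -
  define M where "M = mat n n (\<lambda>(i, j). F i j)"
  have M: "M \<in> carrier_mat n n" by (simp add: M_def)
  have M_vec: "(M *\<^sub>v v) $ i = (\<Sum>j<n. F i j * v $ j)" if "i < n" "v \<in> carrier_vec n" for i v
    using that by (simp add: M_def index_mult_mat_vec scalar_prod_def row_def atLeast0LessThan)
  have "det M \<noteq> 0"
  proof
    assume "det M = 0"
    then obtain v where v: "v \<in> carrier_vec n" "v \<noteq> 0\<^sub>v n" "M *\<^sub>v v = 0\<^sub>v n"
      using det_0_iff_vec_prod_zero_field[OF M] by auto
    have "\<forall>j<n. v $ j = 0"
    proof (rule inj)
      fix i assume i: "i < n"
      have "(M *\<^sub>v v) $ i = 0" using v(3) i by simp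
      then show "(\<Sum>j<n. F i j * v $ j) = 0" using M_vec[OF i v(1)] by simp
    qed
    then show False using v by (auto simp: vec_eq_iff)
  qed
  then obtain N where N: "N \<in> carrier_mat n n" "M * N = 1\<^sub>m n"
    using det_non_zero_imp_unit[OF M] unfolding Units_def ring_mat_def by auto
  define y where "y = N *\<^sub>v vec n b"
  have y: "y \<in> carrier_vec n" using N(1) by (simp add: y_def)
  have "M *\<^sub>v y = vec n b"
    unfolding y_def using N M by (simp add: assoc_mult_mat_vec[symmetric])
  then have "\<forall>i<n. (\<Sum>j<n. F i j * y $ j) = b i"
    using M_vec y by (metis index_vec)
  then show ?thesis by blast
qed

locale positive_nodes = distinct_nodes +
  fixes d :: nat
  assumes d: "d \<ge> 1"
    and low_terms: "\<And>i l. i < n \<Longrightarrow> l \<le> 0 \<Longrightarrow> fls_nth (a i) l = 0"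
begin

lemma subdegree_node_diff_ge_1: "i < n \<Longrightarrow> j < n \<Longrightarrow> i \<noteq> j \<Longrightarrow> fls_subdegree (a i - a j) \<ge> 1"
  using node_diff_nonzero low_terms by (intro fls_subdegree_ge_1) auto

text \<open>If all \<open>x\<^sub>j\<close> vanish below \<open>t\<^sup>K\<close>, the coefficients of \<open>t\<^sup>K\<close> in \<open>x (\<A> x)\<^sub>i\<close> are the
  weighted Laplacian of the coefficients of \<open>t\<^sup>K\<close> in \<open>x\<^sub>j\<close>, with weights \<open>m\<^sub>i\<^sub>,\<^sub>j\<close>.\<close>

lemma fls_nth_xvar_matvec_Amat:
  assumes i: "i < n" and below: "\<And>j l. j < n \<Longrightarrow> l < K \<Longrightarrow> fls_nth (x j) l = 0"
  shows "fls_nth (xvar d * matvec n (Amat d a n) x i) K =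
    (\<Sum>j\<in>{..<n} - {i}. of_real (of_int (fls_subdegree (a i - a j)) / real d)
                         * (fls_nth (x i) K - fls_nth (x j) K))"
proof -
  let ?q = "\<lambda>j. xvar d * pder d (a i - a j) / (a i - a j)"
  have "xvar d * matvec n (Amat d a n) x i = (\<Sum>j\<in>{..<n} - {i}. ?q j * (x i - x j))"
    by (simp add: matvec_Amat[OF i] sum_distrib_left pder_diff divide_inverse ac_simps)
  then have "fls_nth (xvar d * matvec n (Amat d a n) x i) K
      = (\<Sum>j\<in>{..<n} - {i}. fls_nth (?q j * (x i - x j)) K)"
    by (simp add: fls_nth_sum)
  also have "\<dots> = (\<Sum>j\<in>{..<n} - {i}. of_real (of_int (fls_subdegree (a i - a j)) / real d)
                         * (fls_nth (x i) K - fls_nth (x j) K))"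
  proof (rule sum.cong[OF refl])
    fix j assume "j \<in> {..<n} - {i}"
    then have j: "j < n" "i \<noteq> j" by auto
    have lowest: "fls_subdegree (?q j) = 0 \<and>
        fls_nth (?q j) 0 = of_int (fls_subdegree (a i - a j)) / of_nat d"
      using logderiv_lowest_term[OF d node_diff_nonzero[OF i j]] subdegree_node_diff_ge_1[OF i j]
      by simp
    have "fls_nth (?q j * (x i - x j)) K = fls_nth (?q j) 0 * fls_nth (x i - x j) K"
      by (rule fls_nth_mult_subdegree_0) (use lowest below i j in auto)
    then show "fls_nth (?q j * (x i - x j)) K = of_real (of_int (fls_subdegree (a i - a j)) / real d)
                         * (fls_nth (x i) K - fls_nth (x j) K)"
      using lowest by simp
  qed
  finally show ?thesis .
qed

lemma pnu_ge_succ_if_Amat_pnu_ge: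
  assumes sum: "(\<Sum>j<n. x j) = 0"
    and Ax: "\<And>i. i < n \<Longrightarrow> pnu_ge d (matvec n (Amat d a n) x i) s"
    and j0: "j0 < n"
  shows "pnu_ge d (x j0) (s + 1)"
proof (rule ccontr)
  assume not_ge: "\<not> pnu_ge d (x j0) (s + 1)"
  then have x0: "x j0 \<noteq> 0" by (auto simp: pnu_ge_def)
  define Z where "Z = {j. j < n \<and> x j \<noteq> 0}"
  define K where "K = Min ((\<lambda>j. fls_subdegree (x j)) ` Z)"
  have finZ: "finite ((\<lambda>j. fls_subdegree (x j)) ` Z)" unfolding Z_def by simp
  have neZ: "(\<lambda>j. fls_subdegree (x j)) ` Z \<noteq> {}" using j0 x0 unfolding Z_def by auto
  obtain j1 where j1: "j1 \<in> Z" "fls_subdegree (x j1) = K"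
    using Min_in[OF finZ neZ] unfolding K_def by auto
  have "K \<le> fls_subdegree (x j0)" unfolding K_def using finZ j0 x0 Z_def by auto
  moreover have "of_int (fls_subdegree (x j0)) / of_nat d < s + 1"
    using not_ge x0 by (simp add: pnu_ge_def pnu_def)
  then have "of_int (fls_subdegree (x j0)) < (s + 1) * of_nat d"
    using d by (simp add: divide_less_eq)
  ultimately have K_lt: "of_int K < (s + 1) * of_nat d" by linarith
  have below: "fls_nth (x j) l = 0" if "j < n" "l < K" for j l
  proof (cases "x j = 0")
    case False
    then have "K \<le> fls_subdegree (x j)" unfolding K_def using finZ that Z_def by auto
    then show ?thesis using that by simp
  qed simp
  have "\<forall>i<n. fls_nth (x i) K = 0"
  proof (rule weighted_laplacian_eq_0)
    show "of_int (fls_subdegree (a i - a j)) / real d > 0" if "i < n" "j < n" "i \<noteq> j" for i j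
      using subdegree_node_diff_ge_1[OF that] d by simp
    show "(\<Sum>j\<in>{..<n} - {i}. of_real (of_int (fls_subdegree (a i - a j)) / real d)
            * (fls_nth (x i) K - fls_nth (x j) K)) = 0" if i: "i < n" for i
    proof -
      have "of_int (K - int d) < s * of_nat d" using K_lt by (simp add: algebra_simps)
      then have "fls_nth (matvec n (Amat d a n) x i) (K - int d) = 0"
        using Ax[OF i] by (simp add: pnu_ge_iff[OF d])
      then show ?thesis
        using fls_nth_xvar_matvec_Amat[OF i below] by (simp add: fls_nth_xvar_mult)
    qed
    show "(\<Sum>j<n. fls_nth (x j) K) = 0"
      using arg_cong[OF sum, of "\<lambda>p. fls_nth p K"] by (simp add: fls_nth_sum)
  qed
  then show False using j1 unfolding Z_def by auto
qed

lemma Amat_injective: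
  assumes "(\<Sum>j<n. x j) = 0" and "\<And>i. i < n \<Longrightarrow> matvec n (Amat d a n) x i = 0" and "j < n"
  shows "x j = 0"
proof (rule ccontr)
  assume "x j \<noteq> 0"
  moreover have "pnu_ge d (x j) (pnu d (x j) + 1)"
    using assms by (intro pnu_ge_succ_if_Amat_pnu_ge) auto
  ultimately show False by (simp add: pnu_ge_def)
qed

text \<open>\<open>\<A>\<close> kills the constants; adding the all-ones matrix removes this kernel while
  keeping the equations on zero-sum vectors, since the columns of \<open>\<A>\<close> sum to zero.\<close>

lemma Amat_surjective:
  assumes n: "n \<ge> 1" and sum_b: "(\<Sum>i<n. b i) = 0"
  shows "\<exists>x. (\<Sum>j<n. x j) = 0 \<and> (\<forall>i<n. matvec n (Amat d a n) x i = b i)"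
proof -
  have shifted: "(\<Sum>j<n. (Amat d a n i j + 1) * y j) = matvec n (Amat d a n) y i + (\<Sum>j<n. y j)"
    for i y by (simp add: matvec_def distrib_right sum.distrib)
  have sum_shifted: "(\<Sum>i<n. matvec n (Amat d a n) y i + (\<Sum>j<n. y j)) = of_nat n * (\<Sum>j<n. y j)"
    for y by (simp add: sum.distrib sum_matvec_Amat)
  have "\<exists>y. \<forall>i<n. (\<Sum>j<n. (Amat d a n i j + 1) * y j) = b i"
  proof (rule square_system_solvable_if_injective)
    fix y assume y: "\<And>i. i < n \<Longrightarrow> (\<Sum>j<n. (Amat d a n i j + 1) * y j) = 0"
    then have "(\<Sum>j<n. y j) = 0" using sum_shifted[of y] n by (simp add: shifted)
    then show "\<forall>j<n. y j = 0" using y by (auto simp: shifted intro: Amat_injective)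
  qed
  then obtain y where y: "\<And>i. i < n \<Longrightarrow> matvec n (Amat d a n) y i + (\<Sum>j<n. y j) = b i"
    by (auto simp: shifted)
  then have "(\<Sum>j<n. y j) = 0" using sum_shifted[of y] sum_b n by simp
  then show ?thesis using y by auto
qed

end

section \<open>The equation \<open>u f'\<^sub>x + v f'\<^sub>y = w\<close> at the nodes\<close>

lemma mult_mult_diff_eq_0_iff:
  fixes e x y :: "'a::field"
  shows "e \<noteq> 0 \<Longrightarrow> e * (e * x - y) = 0 \<longleftrightarrow> x = y / e"
  by (auto simp: field_simps)

lemma residual_derivative_term_identity:
  fixes D ei ej pi pj ui uj wi wj :: "'a::field"
  assumes "D \<noteq> 0" "ei \<noteq> 0" "ej \<noteq> 0"
  shows "- pi * ((ui + uj) / D) + ui * ((- pi + - pj) / D)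
      + ((ui * pi + wi / ei) + (uj * pj + wj / ej)) / D
      + (ui * pi + wi / ei) * ((1 + 1) / D) - (wi + wj) / D / ei
    = (pi - pj) / D * (ui - uj) - (- (ei - ej) / (D * ei * ej)) * (wj - wi)
      + wi * ((1 / ei + 1 / ej) / D)"
  using assms by (simp add: field_simps)

lemma divergence_term_identity:
  fixes D ei ej pi pj ui uj wi wj :: "'a::field"
  assumes "D \<noteq> 0" "ei \<noteq> 0" "ej \<noteq> 0"
  shows "ui * ((- pi + - pj) / D) + ui * ((1 + 1) / D * pi) - pi * ((ui + uj) / D)
      + ((ui * pi + wi / ei) + (uj * pj + wj / ej)) / D
    = (pi - pj) / D * (ui - uj) - - (ei - ej) / (D * ei * ej) * (wj - wi)
      + (wi / ej + wj / ei) / D"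
  using assms by (simp add: field_simps)

context distinct_nodes
begin

lemma pdx_fpol:
  assumes n: "n \<ge> 1"
  shows "pdx d (fpol a n) = elem a n (\<lambda>i. - pder d (a i))"
proof -
  let ?fx = "pdx d (fpol a n)"
  have "degree ?fx \<le> n" using degree_pdx_le[of d "fpol a n"] degree_fpol by simp
  moreover have "coeff ?fx n = 0" by (simp add: coeff_pdx coeff_fpol_top)
  ultimately have deg: "degree ?fx < n"
  proof (cases "?fx = 0")
    case False
    then have "coeff ?fx (degree ?fx) \<noteq> 0" by simp
    then show ?thesis using \<open>degree ?fx \<le> n\<close> \<open>coeff ?fx n = 0\<close> by (cases "degree ?fx = n") auto
  qed (use n in simp)
  have "elem a n (\<lambda>i. - pder d (a i)) = elem a n (coord a n ?fx)"
  proof (rule elem_cong)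
    fix i assume i: "i < n"
    have "poly ?fx (a i) = - epsv a n i * pder d (a i)"
      by (simp add: poly_pdx poly_fpol_node[OF i] pderiv_fpol poly_elem_node[OF i] pder_def)
    then show "- pder d (a i) = coord a n ?fx i" using epsv_nonzero[OF i] by (simp add: coord_def)
  qed
  then show ?thesis using elem_coord[OF deg] by simp
qed

lemma residual_at_node:
  fixes u v w :: "nat \<Rightarrow> puis" and d :: nat
  assumes n: "n \<ge> 1" and i: "i < n"
  defines "Q \<equiv> elem a n u * pdx d (fpol a n) + elem a n v * pderiv (fpol a n) - elem a n w"
  shows "poly Q (a i) = epsv a n i * (epsv a n i * (v i - u i * pder d (a i)) - w i)"
    and "poly (pderiv Q) (a i) = epsv a n i * (epsv a n i * (- pder d (a i) * node_sum a n i u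
          + u i * node_sum a n i (\<lambda>k. - pder d (a k)) + node_sum a n i v
          + v i * node_sum a n i (\<lambda>_. 1)) - node_sum a n i w)"
proof -
  have Q: "Q = elem a n u * elem a n (\<lambda>k. - pder d (a k)) + elem a n v * elem a n (\<lambda>_. 1) - elem a n w"
    unfolding Q_def pdx_fpol[OF n] pderiv_fpol ..
  show "poly Q (a i) = epsv a n i * (epsv a n i * (v i - u i * pder d (a i)) - w i)"
    unfolding Q by (simp add: poly_elem_node[OF i] algebra_simps)
  show "poly (pderiv Q) (a i) = epsv a n i * (epsv a n i * (- pder d (a i) * node_sum a n i u
          + u i * node_sum a n i (\<lambda>k. - pder d (a k)) + node_sum a n i v
          + v i * node_sum a n i (\<lambda>_. 1)) - node_sum a n i w)"
    unfolding Q
    by (simp add: pderiv_mult pderiv_diff pderiv_add poly_elem_node[OF i]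
        poly_pderiv_elem_node[OF i] algebra_simps)
qed

lemma residual_derivative_at_node:
  assumes i: "i < n"
    and v: "\<And>j. j < n \<Longrightarrow> v j = u j * pder d (a j) + w j / epsv a n j"
  shows "- pder d (a i) * node_sum a n i u + u i * node_sum a n i (\<lambda>k. - pder d (a k))
          + node_sum a n i v + v i * node_sum a n i (\<lambda>_. 1) - node_sum a n i w / epsv a n i
       = matvec n (Amat d a n) u i - matvec n (Bmat a n) w i"
proof -
  let ?S = "{..<n} - {i}" and ?D = "\<lambda>j. a i - a j" and ?e = "epsv a n" and ?p = "\<lambda>j. pder d (a j)"
  have "- ?p i * node_sum a n i u + u i * node_sum a n i (\<lambda>k. - ?p k) + node_sum a n i v
          + v i * node_sum a n i (\<lambda>_. 1) - node_sum a n i w / ?e i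
      = (\<Sum>j\<in>?S. - ?p i * ((u i + u j) / ?D j) + u i * ((- ?p i + - ?p j) / ?D j)
          + (v i + v j) / ?D j + v i * ((1 + 1) / ?D j) - (w i + w j) / ?D j / ?e i)"
    by (simp add: node_sum_def sum_distrib_left sum_divide_distrib sum.distrib sum_subtractf sum_negf)
  also have "\<dots> = (\<Sum>j\<in>?S. (?p i - ?p j) / ?D j * (u i - u j) - beta a n i j * (w j - w i)
          + w i * ((1 / ?e i + 1 / ?e j) / ?D j))"
  proof (rule sum.cong[OF refl])
    fix j assume "j \<in> ?S"
    then have j: "j < n" "i \<noteq> j" by auto
    show "- ?p i * ((u i + u j) / ?D j) + u i * ((- ?p i + - ?p j) / ?D j)
          + (v i + v j) / ?D j + v i * ((1 + 1) / ?D j) - (w i + w j) / ?D j / ?e i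
        = (?p i - ?p j) / ?D j * (u i - u j) - beta a n i j * (w j - w i)
          + w i * ((1 / ?e i + 1 / ?e j) / ?D j)"
      unfolding v[OF i] v[OF j(1)] beta_def
      by (rule residual_derivative_term_identity[OF node_diff_nonzero[OF i j]
            epsv_nonzero[OF i] epsv_nonzero[OF j(1)]])
  qed
  also have "\<dots> = matvec n (Amat d a n) u i - matvec n (Bmat a n) w i
      + w i * node_sum a n i (\<lambda>k. 1 / ?e k)"
    by (simp add: matvec_Amat[OF i] matvec_Bmat[OF i] node_sum_def sum_distrib_left
        sum.distrib sum_subtractf)
  finally show ?thesis by (simp add: node_sum_inverse_epsv[OF i])
qed

lemma double_roots_iff:
  fixes u v w :: "nat \<Rightarrow> puis" and d :: nat
  assumes n: "n \<ge> 1"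
  defines "Q \<equiv> elem a n u * pdx d (fpol a n) + elem a n v * pderiv (fpol a n) - elem a n w"
  shows "(\<forall>i<n. poly Q (a i) = 0 \<and> poly (pderiv Q) (a i) = 0) \<longleftrightarrow>
    (\<forall>i<n. v i = u i * pder d (a i) + w i / epsv a n i) \<and>
    (\<forall>i<n. matvec n (Amat d a n) u i = matvec n (Bmat a n) w i)"
proof -
  have root: "poly Q (a i) = 0 \<longleftrightarrow> v i = u i * pder d (a i) + w i / epsv a n i" if i: "i < n" for i
    unfolding Q_def residual_at_node(1)[OF n i] mult_mult_diff_eq_0_iff[OF epsv_nonzero[OF i]]
    by (simp add: diff_eq_eq add.commute)
  have double_root: "poly (pderiv Q) (a i) = 0 \<longleftrightarrow>
      matvec n (Amat d a n) u i = matvec n (Bmat a n) w i"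
    if i: "i < n" and v: "\<forall>j<n. v j = u j * pder d (a j) + w j / epsv a n j" for i
  proof -
    let ?X = "- pder d (a i) * node_sum a n i u + u i * node_sum a n i (\<lambda>k. - pder d (a k))
          + node_sum a n i v + v i * node_sum a n i (\<lambda>_. 1)"
    have "poly (pderiv Q) (a i) = 0 \<longleftrightarrow> ?X = node_sum a n i w / epsv a n i"
      unfolding Q_def residual_at_node(2)[OF n i] by (rule mult_mult_diff_eq_0_iff[OF epsv_nonzero[OF i]])
    also have "\<dots> \<longleftrightarrow> ?X - node_sum a n i w / epsv a n i = 0" by (rule eq_iff_diff_eq_0)
    also have "?X - node_sum a n i w / epsv a n i
        = matvec n (Amat d a n) u i - matvec n (Bmat a n) w i"
      by (rule residual_derivative_at_node[OF i]) (use v in auto)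
    finally show ?thesis by simp
  qed
  show ?thesis using root double_root by blast
qed

lemma eq_0_if_double_roots:
  fixes Q :: "puis poly"
  assumes "degree Q < 2 * n" "\<forall>i<n. poly Q (a i) = 0 \<and> poly (pderiv Q) (a i) = 0"
  shows "Q = 0"
  using assms by (intro eq_0_if_linear_powers_dvd[where k = 2, OF distinct])
    (auto intro: linear_square_dvd_if_double_root)

text \<open>Compare the coefficients of \<open>y\<^sup>2\<^sup>n\<^sup>-\<^sup>2\<close>: \<open>u\<close> has degree \<open>< n - 1\<close>, and the leading
  coefficient of \<open>f'\<^sub>y\<close> is \<open>n \<noteq> 0\<close>.\<close>

lemma inF_if_solution:
  assumes n: "n \<ge> 2" and u: "inF a n u" and v: "degree v < n" and w: "degree w < n"
    and eq: "u * pdx d (fpol a n) + v * pderiv (fpol a n) = w"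
  shows "inF a n v"
proof -
  let ?fx = "pdx d (fpol a n)" and ?fy = "pderiv (fpol a n)"
  have "degree ?fx \<le> n - 1" using n by (simp add: pdx_fpol degree_elem_le[simplified])
  moreover have "degree u \<le> n - 2"
  proof (rule ccontr)
    assume "\<not> degree u \<le> n - 2"
    then have "degree u = n - 1" and "coeff u (n - 1) = 0"
      using u by (auto simp: inF_iff_coeff_top)
    then have "u = 0" by (metis leading_coeff_0_iff)
    then show False using \<open>degree u = n - 1\<close> n by simp
  qed
  ultimately have "coeff (u * ?fx) (2 * n - 2) = 0"
    using degree_mult_le[of u ?fx] n by (intro coeff_eq_0) linarith
  moreover have "coeff w (2 * n - 2) = 0" using w n by (intro coeff_eq_0) linarith
  moreover have "coeff (v * ?fy) (2 * n - 2) = coeff v (n - 1) * coeff ?fy (n - 1)"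
  proof -
    have split: "2 * n - 2 = (n - 1) + (n - 1)" using n by simp
    have "degree ?fy \<le> n - 1" unfolding pderiv_fpol by (rule degree_elem_le)
    then show ?thesis unfolding split using v by (intro coeff_mult_at_degree_bounds) simp_all
  qed
  moreover have "coeff ?fy (n - 1) = of_nat n" unfolding pderiv_fpol coeff_elem_top by simp
  ultimately have "coeff v (n - 1) * of_nat n = 0"
    using arg_cong[OF eq, of "\<lambda>p. coeff p (2 * n - 2)"] by simp
  then show ?thesis using v n by (simp add: inF_iff_coeff_top)
qed

lemma solution_iff:
  assumes n: "n \<ge> 2" and w: "inE n w"
  shows "(inF a n u \<and> inF a n v \<and> u * pdx d (fpol a n) + v * pderiv (fpol a n) = w) \<longleftrightarrow>
     (inF a n u
      \<and> (\<forall>i<n. matvec n (Amat d a n) (coord a n u) i = matvec n (Bmat a n) (coord a n w) i)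
      \<and> v = (\<Sum>i<n. smult (coord a n u i * pder d (a i) + coord a n w i / epsv a n i) (eps a n i)))"
    (is "?lhs \<longleftrightarrow> ?rhs")
proof -
  let ?u = "coord a n u" and ?w = "coord a n w" and ?fx = "pdx d (fpol a n)" and ?fy = "pderiv (fpol a n)"
  define vc where "vc i = ?u i * pder d (a i) + ?w i / epsv a n i" for i
  have v_formula: "(\<Sum>i<n. smult (?u i * pder d (a i) + ?w i / epsv a n i) (eps a n i)) = elem a n vc"
    by (simp add: Defs.elem_def vc_def)
  have n1: "n \<ge> 1" using n by simp
  have w_elem: "elem a n ?w = w" using w by (simp add: inE_def elem_coord)
  show ?thesis
  proof
    assume ?lhs
    then have u: "inF a n u" and v: "inF a n v" and eq: "u * ?fx + v * ?fy = w" by auto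
    have u_elem: "elem a n ?u = u" and v_elem: "elem a n (coord a n v) = v"
      using u v by (simp_all add: inF_def inE_def elem_coord)
    have "elem a n ?u * ?fx + elem a n (coord a n v) * ?fy - elem a n ?w = 0"
      using eq u_elem v_elem w_elem by simp
    then have "(\<forall>i<n. coord a n v i = vc i) \<and>
        (\<forall>i<n. matvec n (Amat d a n) ?u i = matvec n (Bmat a n) ?w i)"
      using double_roots_iff[OF n1, where u = ?u and v = "coord a n v" and w = ?w and d = d] by (simp add: vc_def)
    moreover from this have "v = elem a n vc" using v_elem elem_cong by metis
    ultimately show ?rhs using u v_formula by simp
  next
    assume ?rhs
    then have u: "inF a n u" and AB: "\<forall>i<n. matvec n (Amat d a n) ?u i = matvec n (Bmat a n) ?w i"
      and v: "v = elem a n vc" using v_formula by auto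
    have u_elem: "elem a n ?u = u" using u by (simp add: inF_def inE_def elem_coord)
    have deg_v: "degree v < n" using v degree_elem_le[of vc] n by simp
    let ?Q = "elem a n ?u * ?fx + elem a n vc * ?fy - elem a n ?w"
    have Q: "?Q = u * ?fx + v * ?fy - w" using u_elem v w_elem by simp
    have "degree ?Q < 2 * n"
    proof -
      have "degree ?fx \<le> n - 1" "degree ?fy \<le> n - 1"
        unfolding pdx_fpol[OF n1] pderiv_fpol by (rule degree_elem_le)+
      moreover have "degree u < n" using u by (simp add: inF_def inE_def)
      ultimately have "degree (u * ?fx) \<le> 2 * n - 2" "degree (v * ?fy) \<le> 2 * n - 2"
        using degree_mult_le[of u ?fx] degree_mult_le[of v ?fy] deg_v by linarith+
      then have "degree (u * ?fx + v * ?fy) \<le> 2 * n - 2" by (intro degree_add_le)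
      moreover have "degree w \<le> 2 * n - 2" using w n by (simp add: inE_def)
      ultimately have "degree ?Q \<le> 2 * n - 2" unfolding Q by (intro degree_diff_le)
      then show ?thesis using n by linarith
    qed
    moreover have "\<forall>i<n. poly ?Q (a i) = 0 \<and> poly (pderiv ?Q) (a i) = 0"
      using double_roots_iff[OF n1, where u = ?u and v = vc and w = ?w and d = d] AB by (simp add: vc_def)
    ultimately have "?Q = 0" by (rule eq_0_if_double_roots)
    then have eq: "u * ?fx + v * ?fy = w" using Q by simp
    then show ?lhs using u inF_if_solution[OF n u deg_v] w by (simp add: inE_def)
  qed
qed

lemma pder_epsv:
  assumes n: "n \<ge> 1" and i: "i < n"
  shows "pder d (epsv a n i) = epsv a n i * (node_sum a n i (\<lambda>k. - pder d (a k))
    + node_sum a n i (\<lambda>_. 1) * pder d (a i))"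
proof -
  have "pdx d (elem a n (\<lambda>_. 1)) = pderiv (elem a n (\<lambda>k. - pder d (a k)))"
    unfolding pderiv_fpol[symmetric] pdx_pderiv pdx_fpol[OF n] ..
  then have "poly (pdx d (elem a n (\<lambda>_. 1))) (a i) = epsv a n i * node_sum a n i (\<lambda>k. - pder d (a k))"
    by (simp add: poly_pderiv_elem_node[OF i])
  moreover have "poly (pdx d (elem a n (\<lambda>_. 1))) (a i)
      = pder d (epsv a n i) - epsv a n i * node_sum a n i (\<lambda>_. 1) * pder d (a i)"
    by (simp add: poly_pdx poly_elem_node[OF i] poly_pderiv_elem_node[OF i])
  ultimately show ?thesis by (simp add: algebra_simps)
qed

text \<open>The terms of \<open>u\<close> that are not differentiated recombine into
  \<open>(\<A> u)\<^sub>i = (\<B> w)\<^sub>i\<close>, leaving only \<open>w\<close>.\<close>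

lemma coord_divergence:
  fixes ut wt :: "nat \<Rightarrow> puis"
  assumes n: "n \<ge> 1" and i: "i < n"
    and AB: "matvec n (Amat d a n) ut i = matvec n (Bmat a n) wt i"
  defines "vt \<equiv> \<lambda>j. ut j * pder d (a j) + wt j / epsv a n j"
  shows "coord a n (pdx d (elem a n ut) + pderiv (elem a n vt)) i
     = pder d (ut i) + (\<Sum>j\<in>{..<n} - {i}. (wt i / epsv a n j + wt j / epsv a n i) / (a i - a j))"
proof -
  let ?S = "{..<n} - {i}" and ?D = "\<lambda>j. a i - a j" and ?e = "epsv a n" and ?p = "\<lambda>j. pder d (a j)"
  have ei: "?e i \<noteq> 0" by (rule epsv_nonzero[OF i])
  have "coord a n (pdx d (elem a n ut) + pderiv (elem a n vt)) i
      = pder d (ut i) + (ut i * (node_sum a n i (\<lambda>k. - ?p k) + node_sum a n i (\<lambda>_. 1) * ?p i)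
          - ?p i * node_sum a n i ut + node_sum a n i vt)"
    using ei by (simp add: coord_def poly_pdx poly_elem_node[OF i] poly_pderiv_elem_node[OF i]
        pder_mult pder_epsv[OF n i] field_simps)
  also have "ut i * (node_sum a n i (\<lambda>k. - ?p k) + node_sum a n i (\<lambda>_. 1) * ?p i)
      - ?p i * node_sum a n i ut + node_sum a n i vt
      = (\<Sum>j\<in>?S. ut i * ((- ?p i + - ?p j) / ?D j) + ut i * ((1 + 1) / ?D j * ?p i)
          - ?p i * ((ut i + ut j) / ?D j) + (vt i + vt j) / ?D j)"
    by (simp add: node_sum_def sum_distrib_left sum_distrib_right sum.distrib sum_subtractf
        sum_negf distrib_left)
  also have "\<dots> = (\<Sum>j\<in>?S. (?p i - ?p j) / ?D j * (ut i - ut j) - beta a n i j * (wt j - wt i)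
      + (wt i / ?e j + wt j / ?e i) / ?D j)"
  proof (rule sum.cong[OF refl])
    fix j assume "j \<in> ?S"
    then have j: "j < n" "i \<noteq> j" by auto
    show "ut i * ((- ?p i + - ?p j) / ?D j) + ut i * ((1 + 1) / ?D j * ?p i)
          - ?p i * ((ut i + ut j) / ?D j) + (vt i + vt j) / ?D j
        = (?p i - ?p j) / ?D j * (ut i - ut j) - beta a n i j * (wt j - wt i)
          + (wt i / ?e j + wt j / ?e i) / ?D j"
      unfolding vt_def beta_def
      by (rule divergence_term_identity[OF node_diff_nonzero[OF i j] ei epsv_nonzero[OF j(1)]])
  qed
  also have "\<dots> = matvec n (Amat d a n) ut i - matvec n (Bmat a n) wt i
      + (\<Sum>j\<in>?S. (wt i / ?e j + wt j / ?e i) / ?D j)"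
    by (simp add: matvec_Amat[OF i] matvec_Bmat[OF i] sum.distrib sum_subtractf)
  finally show ?thesis using AB by simp
qed

end

section \<open>Valuation bounds\<close>

locale puiseux_nodes = positive_nodes +
  assumes n: "n \<ge> 2"
begin

lemma n_ge_1: "n \<ge> 1"
  using n by simp

lemma mi_plus_mij_le_piinv: "i < n \<Longrightarrow> j < n \<Longrightarrow> i \<noteq> j \<Longrightarrow> mi d a n i + mij d a i j \<le> piinv d a n"
proof -
  assume "i < n" "j < n" "i \<noteq> j"
  have "{mi d a n i + mij d a i j | i j. i < n \<and> j < n \<and> i \<noteq> j}
      \<subseteq> (\<lambda>(i, j). mi d a n i + mij d a i j) ` ({..<n} \<times> {..<n})" by auto
  then have "finite {mi d a n i + mij d a i j | i j. i < n \<and> j < n \<and> i \<noteq> j}"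
    by (rule finite_subset) simp
  then show ?thesis unfolding piinv_def by (rule Max_ge) (use \<open>i < n\<close> \<open>j < n\<close> \<open>i \<noteq> j\<close> in blast)
qed

lemma pnu_ge_deltainv: "i < n \<Longrightarrow> pnu_ge d (a i) (deltainv d a n)"
proof -
  assume i: "i < n"
  have "{pnu d (a i) | i. i < n \<and> a i \<noteq> 0} \<subseteq> (\<lambda>i. pnu d (a i)) ` {..<n}" by auto
  then have "finite {pnu d (a i) | i. i < n \<and> a i \<noteq> 0}" by (rule finite_subset) simp
  then have "a i \<noteq> 0 \<Longrightarrow> deltainv d a n \<le> pnu d (a i)"
    unfolding deltainv_def by (rule Min_le) (use i in blast)
  then show ?thesis by (auto simp: pnu_ge_def)
qed

lemma pnu_epsv: "i < n \<Longrightarrow> pnu d (epsv a n i) = mi d a n i"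
  unfolding epsv_def mi_def mij_def using distinct by (subst pnu_prod) auto

lemma mij_commute: "mij d a i j = mij d a j i"
  unfolding mij_def by (rule pnu_diff_commute)

lemma mi_plus_deltainv_le_piinv:
  assumes i: "i < n"
  shows "mi d a n i + deltainv d a n \<le> piinv d a n"
proof -
  define j where "j = (if i = 0 then 1 else 0 :: nat)"
  have j: "j < n" "i \<noteq> j" using n by (auto simp: j_def)
  have "pnu_ge d (a i - a j) (deltainv d a n)"
    using pnu_ge_deltainv d i j by (intro pnu_ge_diff) auto
  then have "deltainv d a n \<le> mij d a i j"
    using node_diff_nonzero[OF i j] by (simp add: pnu_ge_def mij_def)
  then show ?thesis using mi_plus_mij_le_piinv[OF i j] by simp
qed

lemma pnu_ge_divide_epsv:
  assumes "pnu_ge d p r" "i < n"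
  shows "pnu_ge d (p / epsv a n i) (r - mi d a n i)"
  using pnu_ge_divide[OF assms(1) epsv_nonzero[OF assms(2)]] by (simp add: pnu_epsv[OF assms(2)])

lemma pnu_ge_beta:
  assumes i: "i < n" and j: "j < n" and ij: "i \<noteq> j"
  shows "pnu_ge d (beta a n i j) (- piinv d a n)"
proof -
  let ?mi = "mi d a n i" and ?mj = "mi d a n j" and ?m = "mij d a i j"
  have epsv_ge: "pnu_ge d (epsv a n k) (mi d a n k)" if "k < n" for k
    using pnu_ge_self[of d "epsv a n k"] pnu_epsv[OF that] by simp
  have "pnu_ge d (epsv a n i) (min ?mi ?mj)" "pnu_ge d (epsv a n j) (min ?mi ?mj)"
    by (rule pnu_ge_mono[OF epsv_ge[OF i]], simp) (rule pnu_ge_mono[OF epsv_ge[OF j]], simp)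
  then have num: "pnu_ge d (- (epsv a n i - epsv a n j)) (min ?mi ?mj)"
    by (intro pnu_ge_uminus[OF d] pnu_ge_diff[OF d])
  have nonzero: "(a i - a j) * epsv a n i * epsv a n j \<noteq> 0"
    using node_diff_nonzero[OF i j ij] epsv_nonzero[OF i] epsv_nonzero[OF j] by simp
  have "pnu d ((a i - a j) * epsv a n i * epsv a n j) = ?m + ?mi + ?mj"
    using node_diff_nonzero[OF i j ij] epsv_nonzero[OF i] epsv_nonzero[OF j]
    by (simp add: pnu_mult pnu_epsv[OF i] pnu_epsv[OF j] mij_def)
  then have "pnu_ge d (beta a n i j) (min ?mi ?mj - (?m + ?mi + ?mj))"
    unfolding beta_def using pnu_ge_divide[OF num nonzero] by simp
  moreover have "- piinv d a n \<le> min ?mi ?mj - (?m + ?mi + ?mj)"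
    using mi_plus_mij_le_piinv[OF i j ij] mi_plus_mij_le_piinv[OF j i] ij mij_commute[of i j]
    by (auto simp: min_def)
  ultimately show ?thesis by (rule pnu_ge_mono)
qed

lemma pnu_ge_matvec_Bmat:
  assumes i: "i < n" and w: "\<And>j. j < n \<Longrightarrow> pnu_ge d (w j) r"
  shows "pnu_ge d (matvec n (Bmat a n) w i) (r - piinv d a n)"
proof -
  have "pnu_ge d (\<Sum>j\<in>{..<n} - {i}. beta a n i j * (w j - w i)) (- piinv d a n + r)"
    using i w by (intro pnu_ge_sum[OF d] pnu_ge_mult pnu_ge_beta pnu_ge_diff[OF d]) auto
  then show ?thesis by (simp add: matvec_Bmat[OF i] algebra_simps)
qed

lemma solution_exists:
  assumes w: "inE n w"
  shows "\<exists>u v. inF a n u \<and> inF a n v \<and> u * pdx d (fpol a n) + v * pderiv (fpol a n) = w"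
proof -
  obtain x where sum_x: "(\<Sum>j<n. x j) = 0"
    and x: "\<forall>i<n. matvec n (Amat d a n) x i = matvec n (Bmat a n) (coord a n w) i"
    using Amat_surjective[OF n_ge_1 sum_matvec_Bmat[where a = a and x = "coord a n w"]] by blast
  let ?u = "elem a n x"
  let ?v = "\<Sum>i<n. smult (coord a n ?u i * pder d (a i) + coord a n w i / epsv a n i) (eps a n i)"
  have coord_u: "\<And>i. i < n \<Longrightarrow> coord a n ?u i = x i" by (rule coord_elem)
  have "inF a n ?u"
    using degree_elem_le[of x] n sum_x by (simp add: inF_def inE_def coord_u)
  moreover have "matvec n (Amat d a n) (coord a n ?u) = matvec n (Amat d a n) x"
    by (auto simp: matvec_def coord_u)
  ultimately have "inF a n ?u \<and> inF a n ?v \<and> ?u * pdx d (fpol a n) + ?v * pderiv (fpol a n) = w"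
    using x by (subst solution_iff[OF n w]) simp
  then show ?thesis by blast
qed

lemma solution_valuation_bounds:
  assumes w: "inE n w" "val_ge d a n w r"
  shows "\<exists>u v. inF a n u \<and> val_ge d a n u (r - thetainv d a n)
    \<and> inF a n v \<and> val_ge d a n v (r - tauinv d a n)
    \<and> w = u * pdx d (fpol a n) + v * pderiv (fpol a n)"
proof -
  obtain u v where u: "inF a n u" and v: "inF a n v"
    and eq: "u * pdx d (fpol a n) + v * pderiv (fpol a n) = w"
    using solution_exists[OF w(1)] by blast
  then have AB: "\<forall>i<n. matvec n (Amat d a n) (coord a n u) i = matvec n (Bmat a n) (coord a n w) i"
    and v_elem: "v = elem a n (\<lambda>i. coord a n u i * pder d (a i) + coord a n w i / epsv a n i)"
    unfolding Defs.elem_def using solution_iff[OF n w(1), where u = u and v = v and d = d] by blast+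
  have u_bound: "val_ge d a n u (r - thetainv d a n)"
    unfolding val_ge_def
  proof (intro allI impI)
    fix j assume "j < n"
    have Bw: "pnu_ge d (matvec n (Bmat a n) (coord a n w) i) (r - piinv d a n)" if "i < n" for i
      using w(2) that by (intro pnu_ge_matvec_Bmat) (auto simp: val_ge_def)
    have "pnu_ge d (coord a n u j) (r - piinv d a n + 1)"
      using u AB Bw \<open>j < n\<close> by (intro pnu_ge_succ_if_Amat_pnu_ge) (auto simp: inF_def)
    then show "pnu_ge d (coord a n u j) (r - thetainv d a n)" by (simp add: thetainv_def algebra_simps)
  qed
  have "val_ge d a n v (r - tauinv d a n)"
    unfolding val_ge_def
  proof (intro allI impI)
    fix i assume i: "i < n"
    have "pnu_ge d (coord a n u i * pder d (a i)) (r - tauinv d a n)"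
      using pnu_ge_mult[OF u_bound[unfolded val_ge_def, rule_format, OF i]
          pnu_ge_pder[OF d pnu_ge_deltainv[OF i]]]
      by (simp add: thetainv_def tauinv_def algebra_simps)
    moreover have "pnu_ge d (coord a n w i / epsv a n i) (r - tauinv d a n)"
      by (rule pnu_ge_mono[OF pnu_ge_divide_epsv[OF w(2)[unfolded val_ge_def, rule_format, OF i] i]])
        (use mi_plus_deltainv_le_piinv[OF i] in \<open>simp add: tauinv_def\<close>)
    ultimately show "pnu_ge d (coord a n v i) (r - tauinv d a n)"
      using v_elem coord_elem[OF i] pnu_ge_add[OF d] by simp
  qed
  then show ?thesis using u v eq u_bound by blast
qed

lemma inF_divergence:
  assumes u: "inF a n u" and v: "inF a n v"
  shows "inF a n (pdx d u + pderiv v)"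
proof -
  have deg_u: "degree u < n" and deg_v: "degree v < n" using u v by (simp_all add: inF_def inE_def)
  have "degree (pdx d u) < n" using degree_pdx_le[of d u] deg_u by linarith
  moreover have "degree (pderiv v) < n" using deg_v by (simp add: degree_pderiv)
  ultimately have "degree (pdx d u + pderiv v) < n" by (rule degree_add_less)
  moreover have "coeff u (n - 1) = 0" using u by (simp add: inF_iff_coeff_top)
  moreover have "coeff v n = 0" using deg_v by (rule coeff_eq_0)
  ultimately show ?thesis
    using n by (simp add: inF_iff_coeff_top coeff_pdx coeff_pderiv)
qed

lemma divergence_valuation_bound:
  assumes w: "inE n w" "val_ge d a n w r"
    and u: "inF a n u" "val_ge d a n u (r - thetainv d a n)" and v: "inF a n v"
    and eq: "w = u * pdx d (fpol a n) + v * pderiv (fpol a n)"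
  shows "val_ge d a n (pdx d u + pderiv v) (r - piinv d a n)"
proof -
  have deg_u: "degree u < n" using u by (simp add: inF_def inE_def)
  have AB: "\<forall>i<n. matvec n (Amat d a n) (coord a n u) i = matvec n (Bmat a n) (coord a n w) i"
    and v_elem: "v = elem a n (\<lambda>i. coord a n u i * pder d (a i) + coord a n w i / epsv a n i)"
    unfolding Defs.elem_def using solution_iff[OF n w(1), where u = u and v = v and d = d] u v eq
    by blast+
  show ?thesis
    unfolding val_ge_def
  proof (intro allI impI)
    fix i assume i: "i < n"
    let ?wt = "coord a n w"
    have coord: "coord a n (pdx d u + pderiv v) i = pder d (coord a n u i)
        + (\<Sum>j\<in>{..<n} - {i}. (?wt i / epsv a n j + ?wt j / epsv a n i) / (a i - a j))"
      using coord_divergence[OF n_ge_1 i, where ut = "coord a n u" and wt = ?wt] AB i v_elem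
        elem_coord[OF deg_u] by simp
    have "pnu_ge d ((?wt i / epsv a n j + ?wt j / epsv a n i) / (a i - a j)) (r - piinv d a n)"
      if j: "j < n" "i \<noteq> j" for j
    proof -
      have wt: "pnu_ge d (?wt k) r" if "k < n" for k using w(2) that by (simp add: val_ge_def)
      have "pnu_ge d (?wt i / epsv a n j) (r - piinv d a n + mij d a i j)"
        by (rule pnu_ge_mono[OF pnu_ge_divide_epsv[OF wt[OF i] j(1)]])
          (use mi_plus_mij_le_piinv[OF j(1) i] j mij_commute[of i j] in simp)
      moreover have "pnu_ge d (?wt j / epsv a n i) (r - piinv d a n + mij d a i j)"
        by (rule pnu_ge_mono[OF pnu_ge_divide_epsv[OF wt[OF j(1)] i]])
          (use mi_plus_mij_le_piinv[OF i j] in simp)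
      ultimately have "pnu_ge d (?wt i / epsv a n j + ?wt j / epsv a n i) (r - piinv d a n + mij d a i j)"
        by (rule pnu_ge_add[OF d])
      from pnu_ge_divide[OF this node_diff_nonzero[OF i j]] show ?thesis by (simp add: mij_def)
    qed
    moreover have "pnu_ge d (pder d (coord a n u i)) (r - piinv d a n)"
      using pnu_ge_pder[OF d, of "coord a n u i" "r - thetainv d a n"] u(2) i
      by (simp add: val_ge_def thetainv_def)
    ultimately show "pnu_ge d (coord a n (pdx d u + pderiv v) i) (r - piinv d a n)"
      unfolding coord by (intro pnu_ge_add[OF d] pnu_ge_sum[OF d]) auto
  qed
qed

end

theorem mainTheorem14:
  fixes d n :: nat and a :: "nat \<Rightarrow> complex fls"
  assumes d: "d \<ge> 1"
    and n: "n \<ge> 2"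
    and distinct: "\<And>i j. i < n \<Longrightarrow> j < n \<Longrightarrow> i \<noteq> j \<Longrightarrow> a i \<noteq> a j"
    and pos: "\<And>i. i < n \<Longrightarrow> a i \<noteq> 0 \<Longrightarrow> pnu d (a i) > 0"
  shows
    "(\<forall>w. inE n w \<longrightarrow>
        (\<exists>u v. inF a n u \<and> inF a n v \<and> u * pdx d (fpol a n) + v * pderiv (fpol a n) = w) \<and>
        (\<forall>u v. (inF a n u \<and> inF a n v \<and> u * pdx d (fpol a n) + v * pderiv (fpol a n) = w)
           \<longleftrightarrow> (inF a n u
                \<and> (\<forall>i<n. matvec n (Amat d a n) (coord a n u) i = matvec n (Bmat a n) (coord a n w) i)
                \<and> v = (\<Sum>i<n. smult (coord a n u i * pder d (a i) + coord a n w i / epsv a n i)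
                                   (eps a n i)))))
     \<and> (\<forall>r::rat. \<forall>w. inE n w \<and> val_ge d a n w r \<longrightarrow>
          (\<exists>u v. inF a n u \<and> val_ge d a n u (r - thetainv d a n)
               \<and> inF a n v \<and> val_ge d a n v (r - tauinv d a n)
               \<and> w = u * pdx d (fpol a n) + v * pderiv (fpol a n)))
     \<and> (\<forall>r::rat. \<forall>u v w. inE n w \<and> val_ge d a n w r
          \<and> inF a n u \<and> val_ge d a n u (r - thetainv d a n)
          \<and> inF a n v \<and> val_ge d a n v (r - tauinv d a n)
          \<and> w = u * pdx d (fpol a n) + v * pderiv (fpol a n)
          \<longrightarrow> inF a n (pdx d u + pderiv v) \<and> val_ge d a n (pdx d u + pderiv v) (r - piinv d a n))"
proof -
  have low_terms: "fls_nth (a i) l = 0" if "i < n" "l \<le> 0" for i l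
  proof (cases "a i = 0")
    case False
    then have "0 < fls_subdegree (a i)"
      using pos[OF \<open>i < n\<close>] d by (simp add: pnu_def zero_less_divide_iff)
    then show ?thesis using \<open>l \<le> 0\<close> by simp
  qed simp
  interpret puiseux_nodes a n d
    by unfold_locales (use d n distinct low_terms in auto)
  show ?thesis
  proof (intro conjI allI impI)
    fix w assume w: "inE n w"
    then show "\<exists>u v. inF a n u \<and> inF a n v \<and> u * pdx d (fpol a n) + v * pderiv (fpol a n) = w"
      by (rule solution_exists)
    fix u v
    show "(inF a n u \<and> inF a n v \<and> u * pdx d (fpol a n) + v * pderiv (fpol a n) = w)
      \<longleftrightarrow> (inF a n u
        \<and> (\<forall>i<n. matvec n (Amat d a n) (coord a n u) i = matvec n (Bmat a n) (coord a n w) i)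
        \<and> v = (\<Sum>i<n. smult (coord a n u i * pder d (a i) + coord a n w i / epsv a n i) (eps a n i)))"
      by (rule solution_iff[OF n w])
  qed (blast intro: solution_valuation_bounds inF_divergence divergence_valuation_bound)+
qed

end
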